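(* Fix $1<s<3/2$ and $z\in\mathbb{D}$, and for $N\ge1$ let \[ J_{N,1}=\int_{\mathcal{U}_N(z)}T_z(x_1)^{4s}K(x_1,x_1)^3\,\mathrm{d}\mu(x_1). \] There exists $c_1(s)>0$ such that for all large enough $N$, \[ |J_{N,1}|\le c_1(s)\frac{(1+|z|)^4}{(1-|z|)^4}e^{(3-2s)N}. \]
   Context: $\mathbb{D}$ is the open unit disk, $\mathrm{d}\mu=\frac{1}{\pi}\mathrm{d}x\,\mathrm{d}y$, $K(z,w)=(1-z\overline{w})^{-2}$. $\varphi_z(x)=\frac{z-x}{1-\overline{z}x}$, $d_{\mathrm{h}}(z,x)=\log\frac{1+|\varphi_z(x)|}{1-|\varphi_z(x)|}$, $T_z(x)=e^{-d_{\mathrm{h}}(z,x)}=\frac{1-|\varphi_z(x)|}{1+|\varphi_z(x)|}$, and $\mathcal{U}_N(z)=\{x\in\mathbb{D}:d_{\mathrm{h}}(z,x)<N\}$. *)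

theory Defs
  imports "HOL-Analysis.Analysis"
begin

text \<open>Unit disk, measure d mu = (1/pi) dx dy (Lebesgue measure on complex scaled by 1/pi).\<close>

definition unit_disk :: "complex set" where
  "unit_disk = ball 0 1"

definition bergK :: "complex \<Rightarrow> complex \<Rightarrow> complex" where
  "bergK z w = 1 / (1 - z * cnj w) ^ 2"

definition mobius :: "complex \<Rightarrow> complex \<Rightarrow> complex" where
  "mobius z x = (z - x) / (1 - cnj z * x)"

definition hdist :: "complex \<Rightarrow> complex \<Rightarrow> real" where
  "hdist z x = ln ((1 + cmod (mobius z x)) / (1 - cmod (mobius z x)))"

definition Tz :: "complex \<Rightarrow> complex \<Rightarrow> real" where
  "Tz z x = (1 - cmod (mobius z x)) / (1 + cmod (mobius z x))"

definition hball :: "real \<Rightarrow> complex \<Rightarrow> complex set" where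
  "hball N z = {x \<in> unit_disk. hdist z x < N}"

definition JN1 :: "real \<Rightarrow> complex \<Rightarrow> real \<Rightarrow> complex" where
  "JN1 s z N = (1 / pi) *\<^sub>R
     (LINT x : hball N z | lborel. (Tz z x powr (4 * s)) *\<^sub>R (bergK x x) ^ 3)"

end

theory Submission
  imports Defs
begin

text \<open>
  Write A = (1 + |z|) / (1 - |z|) and u = 1 - |x|^2. The identity
  1 - |phi_z(x)|^2 = (1 - |z|^2) u / |1 - conj z x|^2 gives T_z(x) <= 1 - |phi_z(x)|^2 <= A u,
  while x in U_N(z) means exactly T_z(x) > exp (-N); hence u > exp (-N) / A on U_N(z).
  As K(x, x) = u^-2, the integrand is T_z(x)^(4s) u^-6. Splitting 6 - 4s = b + p with
  0 <= b < 3 - 2s and 0 < p < 1, it is at most A^(4s+b) exp (b N) u^-p, and u^-p is integrable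
  over the disk: on the dyadic annulus 2^-(k+1) < u <= 2^-k, of area pi 2^-k, it is at most
  2^(p(k+1)). So |J_N,1| <= C(z) exp (b N), which lies below exp ((3 - 2s) N) for large N
  because b < 3 - 2s; as the threshold may depend on z, the constant c1 = 1 already works.
\<close>

lemma cmod_mobius_denom_sq_diff:
  "(cmod (1 - cnj z * x))\<^sup>2 - (cmod (z - x))\<^sup>2 = (1 - (cmod z)\<^sup>2) * (1 - (cmod x)\<^sup>2)"
  unfolding cmod_power2 by (simp add: algebra_simps power2_eq_square)

lemma cmod_mobius_denom_ge:
  assumes "cmod x \<le> 1"
  shows "1 - cmod z \<le> cmod (1 - cnj z * x)"
proof -
  have "cmod (cnj z * x) \<le> cmod z"
    using assms by (simp add: norm_mult mult_left_le)
  moreover have "1 - cmod (cnj z * x) \<le> cmod (1 - cnj z * x)"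
    using norm_triangle_ineq2[of 1 "cnj z * x"] by simp
  ultimately show ?thesis by linarith
qed

lemma one_minus_cmod_mobius_sq:
  assumes "cmod z < 1" "cmod x < 1"
  shows "1 - (cmod (mobius z x))\<^sup>2 = (1 - (cmod z)\<^sup>2) * (1 - (cmod x)\<^sup>2) / (cmod (1 - cnj z * x))\<^sup>2"
proof -
  have "0 < cmod (1 - cnj z * x)"
    using cmod_mobius_denom_ge[of x z] assms by linarith
  then show ?thesis
    using cmod_mobius_denom_sq_diff[of z x]
    by (simp add: mobius_def norm_divide power_divide field_simps)
qed

lemma cmod_mobius_less_1:
  assumes "cmod z < 1" "cmod x < 1"
  shows "cmod (mobius z x) < 1"
proof -
  have "0 < (1 - (cmod z)\<^sup>2) * (1 - (cmod x)\<^sup>2)"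
    using assms by (simp add: abs_square_less_1)
  moreover have "0 < cmod (1 - cnj z * x)"
    using cmod_mobius_denom_ge[of x z] assms by linarith
  ultimately have "0 < 1 - (cmod (mobius z x))\<^sup>2"
    unfolding one_minus_cmod_mobius_sq[OF assms] by simp
  then have "(cmod (mobius z x))\<^sup>2 < 1" by simp
  then show ?thesis by (simp add: abs_square_less_1)
qed

lemma one_minus_cmod_mobius_sq_le:
  assumes "cmod z < 1" "cmod x < 1"
  shows "1 - (cmod (mobius z x))\<^sup>2 \<le> (1 + cmod z) / (1 - cmod z) * (1 - (cmod x)\<^sup>2)"
proof -
  let ?t = "cmod z" and ?u = "1 - (cmod x)\<^sup>2"
  have t: "0 \<le> ?t" "?t < 1" and u: "0 < ?u"
    using assms by (auto simp: abs_square_less_1)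
  have "(1 - ?t\<^sup>2) * ?u / (cmod (1 - cnj z * x))\<^sup>2 \<le> (1 - ?t\<^sup>2) * ?u / (1 - ?t)\<^sup>2"
    using cmod_mobius_denom_ge[of x z] assms t u
    by (intro divide_left_mono mult_nonneg_nonneg power_mono mult_pos_pos)
       (auto simp: abs_square_le_1)
  also have "\<dots> = (1 + ?t) * (1 - ?t) * ?u / ((1 - ?t) * (1 - ?t))"
    by (simp add: power2_eq_square algebra_simps)
  also have "\<dots> = (1 + ?t) / (1 - ?t) * ?u"
    using t by simp
  finally show ?thesis
    using one_minus_cmod_mobius_sq[OF assms] by simp
qed

lemma Tz_le_one_minus_cmod_mobius_sq:
  assumes "cmod z < 1" "cmod x < 1"
  shows "Tz z x \<le> 1 - (cmod (mobius z x))\<^sup>2"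
proof -
  let ?m = "cmod (mobius z x)"
  have m: "0 \<le> ?m" "?m < 1"
    using cmod_mobius_less_1[OF assms] by auto
  have "(1 - ?m) * 1 \<le> (1 - ?m) * (1 + ?m)\<^sup>2"
    using m by (intro mult_left_mono one_le_power) auto
  then have "1 - ?m \<le> (1 - ?m\<^sup>2) * (1 + ?m)"
    by (simp add: power2_eq_square algebra_simps)
  moreover have "0 < 1 + ?m" using m by (simp add: add_pos_nonneg)
  ultimately show ?thesis
    by (simp add: Tz_def pos_divide_le_eq)
qed

lemma Tz_eq_exp_neg_hdist:
  assumes "cmod z < 1" "cmod x < 1"
  shows "Tz z x = exp (- hdist z x)"
proof -
  let ?m = "cmod (mobius z x)"
  have "0 < (1 + ?m) / (1 - ?m)"
    using cmod_mobius_less_1[OF assms] by (simp add: add_pos_nonneg)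
  then show ?thesis by (simp add: Tz_def hdist_def exp_minus)
qed

lemma exp_neg_less_Tz:
  assumes "z \<in> unit_disk" "x \<in> hball N z"
  shows "exp (- N) < Tz z x"
  using assms Tz_eq_exp_neg_hdist[of z x] by (auto simp: hball_def unit_disk_def)

lemma bergK_diag: "bergK x x = complex_of_real (1 / (1 - (cmod x)\<^sup>2)\<^sup>2)"
proof -
  have "x * cnj x = complex_of_real ((cmod x)\<^sup>2)"
    using complex_norm_square[of x] by simp
  then show ?thesis by (simp add: bergK_def)
qed

lemma powr_mult_powr_le_of_bounds:
  fixes T u A e a b p :: real
  assumes "0 < A" "0 < e" "e \<le> T" "T \<le> A * u" "0 \<le> a" "0 \<le> b"
  shows "T powr a * u powr (- (a + b + p)) \<le> A powr (a + b) * e powr (- b) * u powr (- p)"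
proof -
  have "0 < A * u"
    using assms by linarith
  then have u: "0 < u"
    using assms by (simp add: zero_less_mult_iff)
  have e_le_u: "e / A \<le> u"
    using assms by (simp add: divide_le_eq mult.commute)
  have "T powr a \<le> (A * u) powr a"
    using assms by (intro powr_mono2) auto
  then have "T powr a * u powr (- a) \<le> (A * u) powr a * u powr (- a)"
    by (rule mult_right_mono) simp
  also have "\<dots> = A powr a"
    using u by (simp add: powr_mult mult.assoc flip: powr_add)
  finally have Tu: "T powr a * u powr (- a) \<le> A powr a" .
  have ub: "u powr (- b) \<le> (e / A) powr (- b)"
    using assms e_le_u by (intro powr_mono2') auto
  have "T powr a * u powr (- (a + b + p)) = (T powr a * u powr (- a)) * u powr (- b) * u powr (- p)"
    by (simp add: powr_add[symmetric] algebra_simps)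
  also have "\<dots> \<le> A powr a * (e / A) powr (- b) * u powr (- p)"
    using Tu ub by (intro mult_right_mono mult_mono) auto
  also have "\<dots> = A powr (a + b) * e powr (- b) * u powr (- p)"
    using assms by (simp add: powr_divide powr_minus powr_add field_simps)
  finally show ?thesis .
qed

lemma norm_JN1_integrand_le:
  assumes z: "z \<in> unit_disk" and x: "x \<in> hball N z"
    and "0 \<le> s" "0 \<le> b" "b + p = 6 - 4 * s"
  shows "norm (Tz z x powr (4 * s) *\<^sub>R bergK x x ^ 3)
    \<le> ((1 + cmod z) / (1 - cmod z)) powr (4 * s + b) * exp (b * N) * (1 - (cmod x)\<^sup>2) powr (- p)"
proof -
  define A where "A = (1 + cmod z) / (1 - cmod z)"
  define u where "u = 1 - (cmod x)\<^sup>2"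
  have zx: "cmod z < 1" "cmod x < 1"
    using z x by (auto simp: unit_disk_def hball_def)
  have A: "0 < A"
    using zx by (simp add: A_def add_pos_nonneg)
  have u: "0 < u"
    using zx by (simp add: u_def abs_square_less_1)
  have T_le: "Tz z x \<le> A * u"
    using Tz_le_one_minus_cmod_mobius_sq[OF zx] one_minus_cmod_mobius_sq_le[OF zx]
    by (simp add: A_def u_def)
  have "4 * s + b + p = 6"
    using assms by linarith
  then have "norm (bergK x x ^ 3) = u powr (- (4 * s + b + p))"
    unfolding bergK_diag norm_power norm_of_real u_def[symmetric]
    using u by (simp add: powr_minus powr_numeral power_one_over inverse_eq_divide flip: power_mult)
  then have "norm (Tz z x powr (4 * s) *\<^sub>R bergK x x ^ 3)
      = Tz z x powr (4 * s) * u powr (- (4 * s + b + p))"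
    by simp
  also have "\<dots> \<le> A powr (4 * s + b) * exp (- N) powr (- b) * u powr (- p)"
    using A T_le exp_neg_less_Tz[OF z x] assms
    by (intro powr_mult_powr_le_of_bounds) auto
  finally show ?thesis
    by (simp add: A_def u_def exp_powr_real mult.commute)
qed

definition dyadic_annulus :: "nat \<Rightarrow> complex set" where
  "dyadic_annulus k = ball 0 1 - ball 0 (sqrt (1 - (1 / 2) ^ k))"

lemma sets_dyadic_annulus [measurable]: "dyadic_annulus k \<in> sets lborel"
  unfolding dyadic_annulus_def by simp

lemma emeasure_dyadic_annulus: "emeasure lborel (dyadic_annulus k) = ennreal (pi * (1 / 2) ^ k)"
proof -
  have r: "0 \<le> 1 - (1 / 2 :: real) ^ k"
    by (simp add: power_le_one)
  then have "ball (0 :: complex) (sqrt (1 - (1 / 2) ^ k)) \<subseteq> ball 0 1"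
    by (intro subset_ball) simp
  then have "emeasure lborel (dyadic_annulus k)
      = emeasure lborel (ball (0 :: complex) 1) - emeasure lborel (ball (0 :: complex) (sqrt (1 - (1 / 2) ^ k)))"
    unfolding dyadic_annulus_def
    by (intro emeasure_Diff) (use emeasure_lborel_ball_finite in \<open>auto simp: less_top\<close>)
  also have "\<dots> = ennreal pi - ennreal (pi * (1 - (1 / 2) ^ k))"
    using r by (simp add: emeasure_ball unit_ball_vol_2)
  also have "\<dots> = ennreal (pi * (1 / 2) ^ k)"
    using r by (subst ennreal_minus) (auto simp: algebra_simps)
  finally show ?thesis .
qed

lemma half_power_eq_two_powr: "(1 / 2 :: real) ^ n = 2 powr (- real n)"
  by (simp only: powr_minus powr_realpow[OF zero_less_numeral])
     (simp add: power_one_over inverse_eq_divide)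

lemma ex_dyadic_bracket:
  fixes u :: real
  assumes "0 < u" "u \<le> 1"
  shows "\<exists>k. (1 / 2) ^ Suc k < u \<and> u \<le> (1 / 2) ^ k"
proof -
  have ex: "\<exists>n. (1 / 2 :: real) ^ n < u"
    using assms by (intro real_arch_pow_inv) auto
  define n where "n = (LEAST n. (1 / 2 :: real) ^ n < u)"
  have n: "(1 / 2) ^ n < u"
    unfolding n_def by (rule LeastI_ex[OF ex])
  then obtain k where k: "n = Suc k"
    using assms by (cases n) auto
  have "\<not> (1 / 2) ^ k < u"
    unfolding n_def by (rule not_less_Least) (use k in \<open>simp add: n_def[symmetric]\<close>)
  then show ?thesis
    using n k by (auto simp: not_less)
qed

lemma powr_le_dyadic_sum:
  fixes p :: real and x :: complex
  assumes "0 < p" "cmod x < 1"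
  shows "ennreal ((1 - (cmod x)\<^sup>2) powr (- p))
    \<le> (\<Sum>k. ennreal (2 powr (p * (k + 1))) * indicator (dyadic_annulus k) x)"
proof -
  define u where "u = 1 - (cmod x)\<^sup>2"
  have "0 < u" "u \<le> 1"
    using assms by (auto simp: u_def abs_square_less_1)
  then obtain k where k: "(1 / 2) ^ Suc k < u" "u \<le> (1 / 2) ^ k"
    using ex_dyadic_bracket by blast
  have "sqrt (1 - (1 / 2) ^ k) \<le> sqrt ((cmod x)\<^sup>2)"
    using k(2) by (intro real_sqrt_le_mono) (simp add: u_def)
  then have x_in: "x \<in> dyadic_annulus k"
    using assms by (simp add: dyadic_annulus_def)
  have "((1 / 2) ^ Suc k) powr (- p) = 2 powr (p * (k + 1))"
    unfolding half_power_eq_two_powr by (simp add: powr_powr algebra_simps)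
  moreover have "u powr (- p) \<le> ((1 / 2) ^ Suc k) powr (- p)"
    using k(1) assms by (intro powr_mono2') auto
  ultimately have "u powr (- p) \<le> 2 powr (p * (k + 1))"
    by simp
  then have "ennreal (u powr (- p)) \<le> ennreal (2 powr (p * (k + 1))) * indicator (dyadic_annulus k) x"
    using x_in by (simp add: ennreal_leI)
  also have "\<dots> \<le> (\<Sum>k. ennreal (2 powr (p * (k + 1))) * indicator (dyadic_annulus k) x)"
    by (rule sum_le_suminf[of _ "{k}", simplified]) (simp_all add: summableI)
  finally show ?thesis
    by (simp only: u_def)
qed

lemma nn_integral_dyadic_sum_finite:
  fixes p :: real
  assumes "p < 1"
  shows "(\<integral>\<^sup>+ x. (\<Sum>k. ennreal (2 powr (p * (k + 1))) * indicator (dyadic_annulus k) x) \<partial>lborel) < \<infinity>"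
proof -
  have "(\<integral>\<^sup>+ x. (\<Sum>k. ennreal (2 powr (p * (k + 1))) * indicator (dyadic_annulus k) x) \<partial>lborel)
      = (\<Sum>k. \<integral>\<^sup>+ x. ennreal (2 powr (p * (k + 1))) * indicator (dyadic_annulus k) x \<partial>lborel)"
    by (rule nn_integral_suminf) measurable
  also have "\<dots> = (\<Sum>k. ennreal (2 powr p * pi * (2 powr (p - 1)) ^ k))"
  proof (rule suminf_cong)
    fix k :: nat
    have "2 powr (p * (k + 1)) * 2 powr (- real k) = 2 powr p * 2 powr (real k * (p - 1))"
      by (simp add: algebra_simps flip: powr_add)
    then have "2 powr (p * (k + 1)) * (pi * (1 / 2) ^ k) = 2 powr p * pi * (2 powr (p - 1)) ^ k"
      by (simp add: half_power_eq_two_powr powr_power mult_ac)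
    moreover have "ennreal (2 powr (p * (k + 1))) * ennreal (pi * (1 / 2) ^ k)
        = ennreal (2 powr (p * (k + 1)) * (pi * (1 / 2) ^ k))"
      by (simp flip: ennreal_mult)
    ultimately show "(\<integral>\<^sup>+ x. ennreal (2 powr (p * (k + 1))) * indicator (dyadic_annulus k) x \<partial>lborel)
        = ennreal (2 powr p * pi * (2 powr (p - 1)) ^ k)"
      by (simp only: nn_integral_cmult_indicator[OF sets_dyadic_annulus] emeasure_dyadic_annulus)
  qed
  also have "\<dots> < \<infinity>"
  proof -
    have "2 powr (p - 1) < 1"
      using assms by (simp add: powr_less_one)
    then have "summable (\<lambda>k. 2 powr p * pi * (2 powr (p - 1)) ^ k)"
      by (intro summable_mult summable_geometric) simp
    then show ?thesis
      by (simp add: ennreal_suminf_neq_top less_top[symmetric])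
  qed
  finally show ?thesis .
qed

lemma nn_integral_unit_disk_powr_finite:
  fixes p :: real
  assumes "0 < p" "p < 1"
  shows "(\<integral>\<^sup>+ x \<in> ball 0 1. ennreal ((1 - (cmod x)\<^sup>2) powr (- p)) \<partial>lborel) < \<infinity>"
proof -
  have "(\<integral>\<^sup>+ x \<in> ball 0 1. ennreal ((1 - (cmod x)\<^sup>2) powr (- p)) \<partial>lborel)
      \<le> (\<integral>\<^sup>+ x. (\<Sum>k. ennreal (2 powr (p * (k + 1))) * indicator (dyadic_annulus k) x) \<partial>lborel)"
    using powr_le_dyadic_sum[OF assms(1)]
    by (intro nn_integral_mono) (simp split: split_indicator)
  also have "\<dots> < \<infinity>"
    using assms(2) by (rule nn_integral_dyadic_sum_finite)
  finally show ?thesis .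
qed

lemma norm_integral_le_nn_integral:
  fixes f :: "'a \<Rightarrow> 'b::{banach, second_countable_topology}"
  assumes "\<And>x. x \<in> space M \<Longrightarrow> ennreal (norm (f x)) \<le> g x"
  shows "ennreal (norm (integral\<^sup>L M f)) \<le> (\<integral>\<^sup>+ x. g x \<partial>M)"
proof (cases "integrable M f")
  case True
  then have "ennreal (norm (integral\<^sup>L M f)) \<le> (\<integral>\<^sup>+ x. norm (f x) \<partial>M)"
    by (rule integral_norm_bound_ennreal)
  also have "\<dots> \<le> (\<integral>\<^sup>+ x. g x \<partial>M)"
    using assms by (rule nn_integral_mono)
  finally show ?thesis .
qed (simp add: not_integrable_integral_eq)

lemma norm_JN1_le_const_mult_exp:
  assumes z: "z \<in> unit_disk" and "0 \<le> s" "0 \<le> b" "0 < p" "p < 1" "b + p = 6 - 4 * s"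
  shows "\<exists>C. \<forall>N. norm (JN1 s z N) \<le> C * exp (b * N)"
proof -
  define A where "A = (1 + cmod z) / (1 - cmod z)"
  define f where "f x = Tz z x powr (4 * s) *\<^sub>R bergK x x ^ 3" for x
  define w where "w x = (1 - (cmod x)\<^sup>2) powr (- p)" for x :: complex
  define I where "I = enn2real (\<integral>\<^sup>+ x \<in> ball 0 1. ennreal (w x) \<partial>lborel)"
  have I: "(\<integral>\<^sup>+ x \<in> ball 0 1. ennreal (w x) \<partial>lborel) = ennreal I"
    using nn_integral_unit_disk_powr_finite[OF assms(4,5)]
    by (simp add: I_def w_def ennreal_enn2real less_top)
  have "norm (JN1 s z N) \<le> A powr (4 * s + b) * I / pi * exp (b * N)" for N
  proof -
    define M where "M = A powr (4 * s + b) * exp (b * N)"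
    have "ennreal (norm (LINT x | lborel. indicator (hball N z) x *\<^sub>R f x))
        \<le> (\<integral>\<^sup>+ x. ennreal M * (ennreal (w x) * indicator (ball 0 1) x) \<partial>lborel)"
    proof (rule norm_integral_le_nn_integral)
      fix x
      show "ennreal (norm (indicator (hball N z) x *\<^sub>R f x))
          \<le> ennreal M * (ennreal (w x) * indicator (ball 0 1) x)"
      proof (cases "x \<in> hball N z")
        case True
        then have "x \<in> ball 0 1"
          by (simp add: hball_def unit_disk_def)
        with True show ?thesis
          using norm_JN1_integrand_le[OF z True assms(2,3,6)]
          by (simp add: M_def A_def f_def w_def ennreal_leI flip: ennreal_mult)
      qed simp
    qed
    also have "\<dots> = ennreal M * ennreal I"
      unfolding I[symmetric] w_def by (rule nn_integral_cmult) (measurable, simp add: pred_def)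
    also have "\<dots> = ennreal (M * I)"
      by (simp add: M_def I_def ennreal_mult)
    finally have "norm (LINT x | lborel. indicator (hball N z) x *\<^sub>R f x) \<le> M * I"
      by (simp add: M_def I_def)
    then show ?thesis
      by (simp add: JN1_def set_lebesgue_integral_def f_def M_def divide_right_mono mult_ac)
  qed
  then show ?thesis by blast
qed

lemma eventually_mult_exp_le_exp:
  fixes b c C :: real
  assumes "b < c"
  shows "\<forall>\<^sub>F N in at_top. C * exp (b * N) \<le> exp (c * N)"
proof -
  have "filterlim (\<lambda>N. exp ((c - b) * N)) at_top at_top"
    using assms
    by (intro filterlim_compose[OF exp_at_top] filterlim_tendsto_pos_mult_at_top[OF tendsto_const]
        filterlim_ident) auto
  then have "\<forall>\<^sub>F N in at_top. C \<le> exp ((c - b) * N)"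
    unfolding filterlim_at_top by blast
  then show ?thesis
  proof eventually_elim
    case (elim N)
    then have "C * exp (b * N) \<le> exp ((c - b) * N) * exp (b * N)"
      by (rule mult_right_mono) simp
    also have "\<dots> = exp (c * N)"
      by (simp add: algebra_simps flip: exp_add)
    finally show ?case .
  qed
qed

lemma exponent_splitE:
  fixes s :: real
  assumes "1 < s" "s < 3 / 2"
  obtains b p where "0 \<le> b" "b < 3 - 2 * s" "0 < p" "p < 1" "b + p = 6 - 4 * s"
proof
  define t where "t = 3 - 2 * s"
  have t: "0 < t" "t < 1"
    using assms by (auto simp: t_def)
  show "0 \<le> t\<^sup>2" "0 < t * (2 - t)"
    using t by auto
  show "t\<^sup>2 < 3 - 2 * s"
    using t by (simp add: t_def[symmetric] power2_eq_square mult_less_cancel_left1)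
  have "1 - t * (2 - t) = (1 - t)\<^sup>2"
    by (simp add: power2_eq_square algebra_simps)
  moreover have "0 < (1 - t)\<^sup>2"
    using t by simp
  ultimately show "t * (2 - t) < 1"
    by linarith
  show "t\<^sup>2 + t * (2 - t) = 6 - 4 * s"
    by (simp add: t_def power2_eq_square algebra_simps)
qed

theorem lemma3p1:
  fixes s :: real
  assumes "1 < s" and "s < 3 / 2"
  shows "\<exists>c1 > 0. \<forall>z \<in> unit_disk. \<forall>\<^sub>F N in at_top.
           norm (JN1 s z N) \<le> c1 * (1 + cmod z) ^ 4 / (1 - cmod z) ^ 4 * exp ((3 - 2 * s) * N)"
proof (intro exI[of _ 1] conjI ballI)
  fix z assume z: "z \<in> unit_disk"
  obtain b p where b: "0 \<le> b" "b < 3 - 2 * s" and p: "0 < p" "p < 1" and bp: "b + p = 6 - 4 * s"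
    using exponent_splitE[OF assms] .
  obtain C where C: "\<And>N. norm (JN1 s z N) \<le> C * exp (b * N)"
    using norm_JN1_le_const_mult_exp[OF z _ b(1) p bp] assms by auto
  have "(1 - cmod z) ^ 4 \<le> (1 + cmod z) ^ 4" "0 < (1 - cmod z) ^ 4"
    using z by (auto simp: unit_disk_def intro: power_mono)
  then have A: "1 \<le> (1 + cmod z) ^ 4 / (1 - cmod z) ^ 4"
    by simp
  show "\<forall>\<^sub>F N in at_top. norm (JN1 s z N)
      \<le> 1 * (1 + cmod z) ^ 4 / (1 - cmod z) ^ 4 * exp ((3 - 2 * s) * N)"
    using eventually_mult_exp_le_exp[OF b(2), of C]
  proof eventually_elim
    case (elim N)
    have "norm (JN1 s z N) \<le> exp ((3 - 2 * s) * N)"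
      using C elim by (rule order_trans)
    also have "\<dots> \<le> (1 + cmod z) ^ 4 / (1 - cmod z) ^ 4 * exp ((3 - 2 * s) * N)"
      using mult_right_mono[OF A exp_ge_zero] by (simp only: mult_1)
    finally show ?case
      by simp
  qed
qed simp

end
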